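(* Fix $\gamma\in(0,1)$ and set $\alpha^{\oplus}=\sqrt{\frac{1+\sqrt{1-\gamma}}{2\pi^2}}$, $\alpha^{\ominus}=\sqrt{\frac{1-\sqrt{1-\gamma}}{2\pi^2}}$. For $\varepsilon>0$ let $\Lambda=\{k\in\mathbb{N}:\lceil\alpha^{\ominus}/\varepsilon\rceil\le k\le\lfloor\alpha^{\oplus}/\varepsilon\rfloor\}$, let $(c_k)_{k\in\Lambda}$ be independent standard normal random variables, and define $f(x)=\sum_{k\in\Lambda}c_k\sqrt{2}\cos(k\pi x)$ for $x\in[0,1]$. Then for any choice of $\delta>0$ and any $q>1$ there exists a constant $C>0$, independent of $\varepsilon$, such that $$\mathbb{P}\Big(\|f\|_{L^\infty(0,1)}\le\varepsilon^{-\delta}\|f\|_{L^2(0,1)}\Big)\ge1-C\varepsilon^q .$$ *)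

theory Defs
  imports "HOL-Probability.Probability"
begin

definition alpha_plus :: "real \<Rightarrow> real" where
  "alpha_plus \<gamma> = sqrt ((1 + sqrt (1 - \<gamma>)) / (2 * pi ^ 2))"

definition alpha_minus :: "real \<Rightarrow> real" where
  "alpha_minus \<gamma> = sqrt ((1 - sqrt (1 - \<gamma>)) / (2 * pi ^ 2))"

definition Lambda :: "real \<Rightarrow> real \<Rightarrow> nat set" where
  "Lambda \<gamma> \<epsilon> = {k. \<lceil>alpha_minus \<gamma> / \<epsilon>\<rceil> \<le> int k \<and> int k \<le> \<lfloor>alpha_plus \<gamma> / \<epsilon>\<rfloor>}"

definition rand_f :: "nat set \<Rightarrow> (nat \<Rightarrow> real) \<Rightarrow> real \<Rightarrow> real" where
  "rand_f \<Lambda> c x = (\<Sum>k\<in>\<Lambda>. c k * sqrt 2 * cos (real k * pi * x))"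

(* L^\<infinity>(0,1) norm; for continuous functions (as here) the essential sup equals the sup *)
definition Linf_norm01 :: "(real \<Rightarrow> real) \<Rightarrow> real" where
  "Linf_norm01 f = (SUP x\<in>{0<..<1}. \<bar>f x\<bar>)"

definition L2_norm01 :: "(real \<Rightarrow> real) \<Rightarrow> real" where
  "L2_norm01 f = sqrt (set_lebesgue_integral lborel {0<..<1} (\<lambda>x. (f x)\<^sup>2))"

end

theory Submission
  imports Defs "HOL-Real_Asymp.Real_Asymp"
begin

text \<open>
  The functions \<open>\<surd>2 cos (k\<pi>x)\<close>, \<open>k \<ge> 1\<close>, are orthonormal on \<open>(0,1)\<close>, so \<open>\<parallel>f\<parallel>\<^sub>2\<close> is the
  Euclidean norm \<open>|c|\<close> of the Gaussian coefficient vector. Since \<open>f\<close> is Lipschitz with constant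
  \<open>O(#\<Lambda> \<cdot> max \<Lambda> \<cdot> |c|)\<close>, its values on a grid of \<open>O(\<epsilon>\<^sup>-\<^sup>2)\<close> points determine \<open>\<parallel>f\<parallel>\<^sub>\<infinity>\<close> up to an
  additive \<open>|c|\<close>. At each grid point \<open>f\<close> is a centred Gaussian of variance at most \<open>2 #\<Lambda>\<close>, so by
  Chernoff's bound it exceeds \<open>(T - 1) \<surd>(#\<Lambda>/2)\<close>, \<open>T = \<epsilon>\<^sup>-\<^sup>\<delta>\<close>, only with probability
  \<open>exp (-(T - 1)\<^sup>2/8)\<close>; and \<open>|c|\<^sup>2 \<le> #\<Lambda>/2\<close> has probability at most \<open>exp (-(ln 3 - 1) #\<Lambda>/2)\<close> with
  \<open>#\<Lambda> \<ge> (\<alpha>\<^sup>\<oplus> - \<alpha>\<^sup>\<ominus>)/\<epsilon> - 1\<close>. Both failure probabilities are \<open>O(\<epsilon>\<^sup>q)\<close> as \<open>\<epsilon> \<rightarrow> 0\<close>, and for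
  \<open>\<epsilon>\<close> bounded away from \<open>0\<close> the claim holds trivially after enlarging \<open>C\<close>.
\<close>

section \<open>Gaussian estimates\<close>

lemma std_normal_density_mult_exp:
  "std_normal_density x * exp (s * x) = exp (s\<^sup>2 / 2) * normal_density s 1 x"
proof -
  have "exp (- x\<^sup>2 / 2) * exp (s * x) = exp (s\<^sup>2 / 2) * exp (- (x - s)\<^sup>2 / 2)"
    by (simp add: exp_add[symmetric] power2_eq_square field_simps)
  then show ?thesis unfolding normal_density_def by simp
qed

lemma std_normal_density_mult_exp_neg_square:
  "std_normal_density x * exp (- x\<^sup>2) = normal_density 0 (1 / sqrt 3) x / sqrt 3"
proof -
  have "exp (- x\<^sup>2 / 2) * exp (- x\<^sup>2) = exp (- (x - 0)\<^sup>2 / (2 * (1 / sqrt 3)\<^sup>2))"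
    by (simp add: exp_add[symmetric] power_divide)
  moreover have "1 / sqrt (2 * pi * (1 / sqrt 3)\<^sup>2) = sqrt 3 * (1 / sqrt (2 * pi))"
    by (simp add: power_divide real_sqrt_divide real_sqrt_mult)
  ultimately show ?thesis unfolding normal_density_def by simp
qed

context prob_space
begin

lemma indep_vars_integral_prod:
  assumes I: "finite I" and ind: "indep_vars (\<lambda>_. borel) c I"
    and dist: "\<forall>k\<in>I. distributed M lborel (c k) p" and p: "\<And>x. 0 \<le> p x"
    and g: "\<And>k. k \<in> I \<Longrightarrow> g k \<in> borel_measurable borel"
    and int: "\<And>k. k \<in> I \<Longrightarrow> integrable lborel (\<lambda>x. p x * g k x)"
  shows "integrable M (\<lambda>\<omega>. \<Prod>k\<in>I. g k (c k \<omega>))"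
    and "(\<integral>\<omega>. (\<Prod>k\<in>I. g k (c k \<omega>)) \<partial>M) = (\<Prod>k\<in>I. \<integral>x. p x * g k x \<partial>lborel)"
proof -
  have ind_g: "indep_vars (\<lambda>_. borel) (\<lambda>k \<omega>. g k (c k \<omega>)) I"
    by (rule indep_vars_compose2[OF ind]) (use g in auto)
  have int_g: "integrable M (\<lambda>\<omega>. g k (c k \<omega>))" if "k \<in> I" for k
    using distributed_integrable[of M lborel "c k" p "g k"] dist g int p that by auto
  show "integrable M (\<lambda>\<omega>. \<Prod>k\<in>I. g k (c k \<omega>))"
    by (rule indep_vars_integrable[OF I ind_g int_g])
  have "(\<integral>\<omega>. (\<Prod>k\<in>I. g k (c k \<omega>)) \<partial>M) = (\<Prod>k\<in>I. \<integral>\<omega>. g k (c k \<omega>) \<partial>M)"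
    by (rule indep_vars_lebesgue_integral[OF I ind_g int_g])
  also have "\<dots> = (\<Prod>k\<in>I. \<integral>x. p x * g k x \<partial>lborel)"
    using distributed_integral[of M lborel "c k" p "g k" for k] dist g p
    by (intro prod.cong) auto
  finally show "(\<integral>\<omega>. (\<Prod>k\<in>I. g k (c k \<omega>)) \<partial>M) = (\<Prod>k\<in>I. \<integral>x. p x * g k x \<partial>lborel)" .
qed

text \<open>Chernoff's bound: Markov's inequality for \<open>exp (l \<Sum>\<^sub>k w\<^sub>k c\<^sub>k)\<close> with \<open>l = t / V\<close>.\<close>

lemma gaussian_sum_tail:
  assumes I: "finite I" and ind: "indep_vars (\<lambda>_. borel) c I"
    and dist: "\<forall>k\<in>I. distributed M lborel (c k) std_normal_density"
    and V: "(\<Sum>k\<in>I. (w k)\<^sup>2) \<le> V" "0 < V" and t: "0 < t"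
  shows "prob {\<omega>\<in>space M. t \<le> (\<Sum>k\<in>I. w k * c k \<omega>)} \<le> exp (- t\<^sup>2 / (2 * V))"
proof -
  define l where "l = t / V"
  have l: "0 < l" using V t by (simp add: l_def)
  have [measurable]: "c k \<in> borel_measurable M" if "k \<in> I" for k
    using dist that distributed_measurable by fastforce
  have exp_eq_prod: "exp (l * (\<Sum>k\<in>I. w k * c k \<omega>)) = (\<Prod>k\<in>I. exp (l * w k * c k \<omega>))" for \<omega>
    using I by (simp add: exp_sum sum_distrib_left mult.assoc)
  note E = indep_vars_integral_prod[OF I ind dist, of "\<lambda>k x. exp (l * w k * x)"]
  have int: "integrable M (\<lambda>\<omega>. \<Prod>k\<in>I. exp (l * w k * c k \<omega>))"
    and mean: "(\<integral>\<omega>. (\<Prod>k\<in>I. exp (l * w k * c k \<omega>)) \<partial>M) = (\<Prod>k\<in>I. exp ((l * w k)\<^sup>2 / 2))"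
    using E by (simp_all add: std_normal_density_mult_exp)
  have "{\<omega>\<in>space M. t \<le> (\<Sum>k\<in>I. w k * c k \<omega>)}
      = {\<omega>\<in>space M. exp (l * t) \<le> (\<Prod>k\<in>I. exp (l * w k * c k \<omega>))}"
    using l by (auto simp: exp_eq_prod[symmetric])
  then have "prob {\<omega>\<in>space M. t \<le> (\<Sum>k\<in>I. w k * c k \<omega>)}
      \<le> (\<Prod>k\<in>I. exp ((l * w k)\<^sup>2 / 2)) / exp (l * t)"
    using integral_Markov_inequality_measure[OF int, of "space M" "exp (l * t)"] mean
    by (simp add: prod_nonneg)
  also have "(\<Prod>k\<in>I. exp ((l * w k)\<^sup>2 / 2)) = exp (l\<^sup>2 * (\<Sum>k\<in>I. (w k)\<^sup>2) / 2)"
    using I by (simp add: exp_sum[symmetric] sum_distrib_left sum_divide_distrib power_mult_distrib)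
  also have "\<dots> \<le> exp (l\<^sup>2 * V / 2)"
    using V by (simp add: mult_left_mono)
  also have "exp (l\<^sup>2 * V / 2) / exp (l * t) = exp (- t\<^sup>2 / (2 * V))"
    using V by (simp add: exp_diff[symmetric] l_def field_simps power2_eq_square)
  finally show ?thesis by (simp add: divide_right_mono)
qed

lemma gaussian_sum_abs_tail:
  assumes I: "finite I" and ind: "indep_vars (\<lambda>_. borel) c I"
    and dist: "\<forall>k\<in>I. distributed M lborel (c k) std_normal_density"
    and V: "(\<Sum>k\<in>I. (w k)\<^sup>2) \<le> V" "0 < V" and t: "0 < t"
  shows "prob {\<omega>\<in>space M. t \<le> \<bar>\<Sum>k\<in>I. w k * c k \<omega>\<bar>} \<le> 2 * exp (- t\<^sup>2 / (2 * V))"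
proof -
  have [measurable]: "c k \<in> borel_measurable M" if "k \<in> I" for k
    using dist that distributed_measurable by fastforce
  define A where "A w' = {\<omega>\<in>space M. t \<le> (\<Sum>k\<in>I. w' k * c k \<omega>)}" for w'
  have "{\<omega>\<in>space M. t \<le> \<bar>\<Sum>k\<in>I. w k * c k \<omega>\<bar>} \<subseteq> A w \<union> A (\<lambda>k. - w k)"
    by (auto simp: A_def sum_negf abs_if)
  then have "prob {\<omega>\<in>space M. t \<le> \<bar>\<Sum>k\<in>I. w k * c k \<omega>\<bar>} \<le> prob (A w) + prob (A (\<lambda>k. - w k))"
    by (intro order.trans[OF finite_measure_mono measure_Un_le]) (auto simp: A_def)
  also have "\<dots> \<le> exp (- t\<^sup>2 / (2 * V)) + exp (- t\<^sup>2 / (2 * V))"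
    unfolding A_def using V by (intro add_mono gaussian_sum_tail[OF I ind dist _ _ t]) auto
  finally show ?thesis by simp
qed

text \<open>Markov's inequality for \<open>exp (- |c|\<^sup>2)\<close>, whose mean is \<open>3 powr (- card I / 2)\<close>.\<close>

lemma gaussian_sum_squares_lower_tail:
  assumes I: "finite I" and ind: "indep_vars (\<lambda>_. borel) c I"
    and dist: "\<forall>k\<in>I. distributed M lborel (c k) std_normal_density"
  shows "prob {\<omega>\<in>space M. (\<Sum>k\<in>I. (c k \<omega>)\<^sup>2) \<le> card I / 2} \<le> exp (- ((ln 3 - 1) / 2) * card I)"
proof -
  have [measurable]: "c k \<in> borel_measurable M" if "k \<in> I" for k
    using dist that distributed_measurable by fastforce
  have exp_eq_prod: "exp (- (\<Sum>k\<in>I. (c k \<omega>)\<^sup>2)) = (\<Prod>k\<in>I. exp (- (c k \<omega>)\<^sup>2))" for \<omega>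
    using I by (simp add: exp_sum sum_negf[symmetric])
  note E = indep_vars_integral_prod[OF I ind dist, of "\<lambda>k x. exp (- x\<^sup>2)"]
  have int: "integrable M (\<lambda>\<omega>. \<Prod>k\<in>I. exp (- (c k \<omega>)\<^sup>2))"
    and mean: "(\<integral>\<omega>. (\<Prod>k\<in>I. exp (- (c k \<omega>)\<^sup>2)) \<partial>M) = (\<Prod>k\<in>I. 1 / sqrt 3)"
    using E by (simp_all add: std_normal_density_mult_exp_neg_square)
  have "{\<omega>\<in>space M. (\<Sum>k\<in>I. (c k \<omega>)\<^sup>2) \<le> card I / 2}
      = {\<omega>\<in>space M. exp (- (card I / 2)) \<le> (\<Prod>k\<in>I. exp (- (c k \<omega>)\<^sup>2))}"
    by (auto simp: exp_eq_prod[symmetric])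
  then have "prob {\<omega>\<in>space M. (\<Sum>k\<in>I. (c k \<omega>)\<^sup>2) \<le> card I / 2}
      \<le> (\<Prod>k\<in>I. 1 / sqrt 3) / exp (- (card I / 2))"
    using integral_Markov_inequality_measure[OF int, of "space M" "exp (- (card I / 2))"] mean
    by (simp add: prod_nonneg)
  also have "(\<Prod>k\<in>I. 1 / sqrt (3::real)) = exp (- ln 3 / 2 * card I)"
  proof -
    have "1 / sqrt (3::real) = exp (- ln 3 / 2)"
      using powr_half_sqrt[of 3] by (simp add: powr_def exp_minus inverse_eq_divide)
    then show ?thesis by (simp add: exp_of_nat_mult[symmetric] mult.commute)
  qed
  also have "exp (- ln 3 / 2 * card I) / exp (- (card I / 2)) = exp (- ((ln 3 - 1) / 2) * card I)"
    by (simp add: exp_diff[symmetric] field_simps)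
  finally show ?thesis .
qed

end

section \<open>The random trigonometric polynomial\<close>

definition cos_pi_primitive :: "int \<Rightarrow> real \<Rightarrow> real" where
  "cos_pi_primitive m x = (if m = 0 then x else sin (of_int m * pi * x) / (of_int m * pi))"

lemma has_real_derivative_cos_pi_primitive:
  "(cos_pi_primitive m has_real_derivative cos (of_int m * pi * x)) (at x)"
  unfolding cos_pi_primitive_def by (cases "m = 0") (auto intro!: derivative_eq_intros)

lemma cos_pi_primitive_1_minus_0:
  "cos_pi_primitive m 1 - cos_pi_primitive m 0 = (if m = 0 then 1 else 0)"
  by (simp add: cos_pi_primitive_def sin_zero_iff_int2)

lemma rand_f_squared:
  assumes "finite \<Lambda>"
  shows "(rand_f \<Lambda> a x)\<^sup>2 = (\<Sum>j\<in>\<Lambda>. \<Sum>k\<in>\<Lambda>. a j * a k *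
     (cos (of_int (int j - int k) * pi * x) + cos (of_int (int j + int k) * pi * x)))"
proof -
  have sqrt2: "sqrt 2 * (sqrt 2 * z) = 2 * z" for z :: real
    by (simp add: mult.assoc[symmetric])
  have cos_prod: "2 * (cos u * cos v) = cos (u - v) + cos (u + v)" for u v :: real
    by (simp add: cos_times_cos)
  have "(rand_f \<Lambda> a x)\<^sup>2 = (\<Sum>j\<in>\<Lambda>. \<Sum>k\<in>\<Lambda>. a j * a k *
      (2 * (cos (real j * pi * x) * cos (real k * pi * x))))"
    unfolding rand_f_def power2_eq_square sum_product by (simp add: ac_simps sqrt2)
  also have "\<dots> = (\<Sum>j\<in>\<Lambda>. \<Sum>k\<in>\<Lambda>. a j * a k *
     (cos (of_int (int j - int k) * pi * x) + cos (of_int (int j + int k) * pi * x)))"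
    unfolding cos_prod by (simp add: algebra_simps)
  finally show ?thesis .
qed

lemma L2_norm01_rand_f:
  assumes fin: "finite \<Lambda>" and "0 \<notin> \<Lambda>"
  shows "L2_norm01 (rand_f \<Lambda> a) = sqrt (\<Sum>k\<in>\<Lambda>. (a k)\<^sup>2)"
proof -
  define G where "G = cos_pi_primitive"
  define F where "F x = (\<Sum>j\<in>\<Lambda>. \<Sum>k\<in>\<Lambda>. a j * a k * (G (int j - int k) x + G (int j + int k) x))" for x
  have "(LBINT x=ereal 0..ereal 1. (rand_f \<Lambda> a x)\<^sup>2) = F 1 - F 0"
  proof (rule interval_integral_FTC_finite)
    show "continuous_on {min 0 1..max 0 1} (\<lambda>x. (rand_f \<Lambda> a x)\<^sup>2)"
      unfolding rand_f_def by (intro continuous_intros)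
    fix x :: real
    have "(F has_real_derivative (rand_f \<Lambda> a x)\<^sup>2) (at x)"
      unfolding F_def rand_f_squared[OF fin] G_def
      by (intro DERIV_sum DERIV_cmult DERIV_add has_real_derivative_cos_pi_primitive)
    then show "(F has_vector_derivative (rand_f \<Lambda> a x)\<^sup>2) (at x within {min 0 1..max 0 1})"
      by (simp add: has_real_derivative_iff_has_vector_derivative[symmetric] has_field_derivative_at_within)
  qed
  also have "F 1 - F 0 = (\<Sum>j\<in>\<Lambda>. \<Sum>k\<in>\<Lambda>. a j * a k *
      ((G (int j - int k) 1 - G (int j - int k) 0) + (G (int j + int k) 1 - G (int j + int k) 0)))"
    unfolding F_def by (simp add: sum_subtractf[symmetric] algebra_simps)
  also have "\<dots> = (\<Sum>j\<in>\<Lambda>. \<Sum>k\<in>\<Lambda>. if k = j then a j * a k else 0)"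
    using \<open>0 \<notin> \<Lambda>\<close> unfolding G_def cos_pi_primitive_1_minus_0
    by (intro sum.cong refl) (auto simp: of_nat_eq_iff)
  also have "\<dots> = (\<Sum>k\<in>\<Lambda>. (a k)\<^sup>2)"
    using fin by (simp add: power2_eq_square)
  finally show ?thesis
    unfolding L2_norm01_def by (simp add: interval_integral_Ioo)
qed

lemma abs_cos_diff_le: "\<bar>cos u - cos v\<bar> \<le> \<bar>u - v\<bar>" for u v :: real
proof -
  have "\<bar>cos u - cos v\<bar> = 2 * \<bar>sin ((u + v) / 2)\<bar> * \<bar>sin ((v - u) / 2)\<bar>"
    unfolding cos_diff_cos by (simp add: abs_mult)
  also have "\<dots> \<le> 2 * 1 * \<bar>(v - u) / 2\<bar>"
    by (intro mult_mono abs_sin_x_le_abs_x) auto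
  finally show ?thesis by simp
qed

lemma rand_f_lipschitz:
  assumes K: "\<forall>k\<in>\<Lambda>. real k \<le> K"
  shows "\<bar>rand_f \<Lambda> a x - rand_f \<Lambda> a y\<bar> \<le> (\<Sum>k\<in>\<Lambda>. \<bar>a k\<bar>) * (sqrt 2 * K * pi * \<bar>x - y\<bar>)"
proof -
  have "\<bar>rand_f \<Lambda> a x - rand_f \<Lambda> a y\<bar>
      = \<bar>\<Sum>k\<in>\<Lambda>. a k * sqrt 2 * (cos (real k * pi * x) - cos (real k * pi * y))\<bar>"
    unfolding rand_f_def by (simp add: sum_subtractf[symmetric] algebra_simps)
  also have "\<dots> \<le> (\<Sum>k\<in>\<Lambda>. \<bar>a k\<bar> * sqrt 2 * \<bar>cos (real k * pi * x) - cos (real k * pi * y)\<bar>)"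
    by (rule order.trans[OF sum_abs]) (simp add: abs_mult)
  also have "\<dots> \<le> (\<Sum>k\<in>\<Lambda>. \<bar>a k\<bar> * sqrt 2 * (K * pi * \<bar>x - y\<bar>))"
  proof (intro sum_mono mult_left_mono)
    fix k assume "k \<in> \<Lambda>"
    have "\<bar>cos (real k * pi * x) - cos (real k * pi * y)\<bar> \<le> \<bar>real k * pi * x - real k * pi * y\<bar>"
      by (rule abs_cos_diff_le)
    also have "\<dots> = real k * pi * \<bar>x - y\<bar>"
      by (simp add: abs_mult right_diff_distrib[symmetric] mult.assoc)
    also have "\<dots> \<le> K * pi * \<bar>x - y\<bar>"
      using K \<open>k \<in> \<Lambda>\<close> by (intro mult_right_mono) auto
    finally show "\<bar>cos (real k * pi * x) - cos (real k * pi * y)\<bar> \<le> K * pi * \<bar>x - y\<bar>" .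
  qed auto
  also have "\<dots> = (\<Sum>k\<in>\<Lambda>. \<bar>a k\<bar>) * (sqrt 2 * K * pi * \<bar>x - y\<bar>)"
    by (subst sum_distrib_right) (simp add: ac_simps)
  finally show ?thesis .
qed

lemma sum_abs_le_card_mult_sqrt_sum_squares:
  fixes a :: "'a \<Rightarrow> real"
  assumes "finite \<Lambda>"
  shows "(\<Sum>k\<in>\<Lambda>. \<bar>a k\<bar>) \<le> card \<Lambda> * sqrt (\<Sum>k\<in>\<Lambda>. (a k)\<^sup>2)"
proof -
  have "\<bar>a k\<bar> \<le> sqrt (\<Sum>k\<in>\<Lambda>. (a k)\<^sup>2)" if "k \<in> \<Lambda>" for k
    using member_le_sum[of k \<Lambda> "\<lambda>k. (a k)\<^sup>2"] assms that real_sqrt_le_mono by fastforce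
  then have "(\<Sum>k\<in>\<Lambda>. \<bar>a k\<bar>) \<le> (\<Sum>k\<in>\<Lambda>. sqrt (\<Sum>k\<in>\<Lambda>. (a k)\<^sup>2))"
    by (rule sum_mono)
  then show ?thesis by simp
qed

lemma bdd_above_abs_rand_f: "bdd_above ((\<lambda>x. \<bar>rand_f \<Lambda> a x\<bar>) ` S)"
proof (rule bdd_aboveI2)
  fix x
  have "\<bar>rand_f \<Lambda> a x\<bar> \<le> (\<Sum>k\<in>\<Lambda>. \<bar>a k * sqrt 2 * cos (real k * pi * x)\<bar>)"
    unfolding rand_f_def by (rule sum_abs)
  also have "\<dots> \<le> (\<Sum>k\<in>\<Lambda>. \<bar>a k\<bar> * sqrt 2)"
    by (intro sum_mono) (simp add: abs_mult mult_left_le del: mult.commute)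
  finally show "\<bar>rand_f \<Lambda> a x\<bar> \<le> (\<Sum>k\<in>\<Lambda>. \<bar>a k\<bar> * sqrt 2)" .
qed

lemma Linf_norm01_rand_f_le_iff:
  "Linf_norm01 (rand_f \<Lambda> a) \<le> y \<longleftrightarrow> (\<forall>x\<in>{0<..<1}. \<bar>rand_f \<Lambda> a x\<bar> \<le> y)"
  unfolding Linf_norm01_def by (rule cSUP_le_iff) (auto simp: bdd_above_abs_rand_f)

lemma abs_le_on_Ioo_if_abs_le_on_Rats:
  fixes f :: "real \<Rightarrow> real"
  assumes cont: "continuous_on UNIV f" and le: "\<forall>x\<in>{a<..<b} \<inter> \<rat>. \<bar>f x\<bar> \<le> y"
    and x: "x \<in> {a<..<b}"
  shows "\<bar>f x\<bar> \<le> y"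
proof (rule ccontr)
  assume "\<not> \<bar>f x\<bar> \<le> y"
  moreover have "continuous (at x) f" using cont by (simp add: continuous_on_eq_continuous_at)
  ultimately obtain d where d: "d > 0" "\<forall>x'. dist x' x < d \<longrightarrow> dist (f x') (f x) < \<bar>f x\<bar> - y"
    unfolding continuous_at_eps_delta by (meson diff_gt_0_iff_gt not_le)
  have "max a (x - d) < min b (x + d)" using x d by auto
  then obtain r where r: "r \<in> \<rat>" "max a (x - d) < r" "r < min b (x + d)"
    using Rats_dense_in_real by blast
  then have "\<bar>f r - f x\<bar> < \<bar>f x\<bar> - y" using d by (auto simp: dist_real_def)
  moreover have "\<bar>f r\<bar> \<le> y" using le r by auto
  ultimately show False by linarith
qed

lemma Linf_norm01_rand_f_le_iff_Rats:
  "Linf_norm01 (rand_f \<Lambda> a) \<le> y \<longleftrightarrow> (\<forall>x\<in>{0<..<1} \<inter> \<rat>. \<bar>rand_f \<Lambda> a x\<bar> \<le> y)"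
proof -
  have "continuous_on UNIV (rand_f \<Lambda> a)"
    unfolding rand_f_def by (intro continuous_intros)
  then show ?thesis
    unfolding Linf_norm01_rand_f_le_iff using abs_le_on_Ioo_if_abs_le_on_Rats by blast
qed

text \<open>Every point of \<open>(0,1)\<close> lies within \<open>1/n\<close> of a grid point \<open>j/n\<close>, and by the choice of \<open>n\<close>
  the Lipschitz constant of \<open>f\<close> is at most \<open>n \<parallel>f\<parallel>\<^sub>2\<close>.\<close>

lemma Linf_norm01_rand_f_le_grid:
  fixes K B :: real and n :: nat
  assumes fin: "finite \<Lambda>" and "0 \<notin> \<Lambda>" and K: "\<forall>k\<in>\<Lambda>. real k \<le> K" "0 \<le> K"
    and n: "1 \<le> n" "card \<Lambda> * (sqrt 2 * K * pi) \<le> n"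
    and grid: "\<forall>j\<le>n. \<bar>rand_f \<Lambda> a (real j / n)\<bar> \<le> B"
  shows "Linf_norm01 (rand_f \<Lambda> a) \<le> B + L2_norm01 (rand_f \<Lambda> a)"
  unfolding Linf_norm01_rand_f_le_iff
proof
  fix x :: real assume x: "x \<in> {0<..<1}"
  define nrm where "nrm = sqrt (\<Sum>k\<in>\<Lambda>. (a k)\<^sup>2)"
  have nrm: "0 \<le> nrm" unfolding nrm_def by (simp add: sum_nonneg)
  define j where "j = nat \<lfloor>x * n\<rfloor>"
  have n_pos: "0 < real n" using n by simp
  have "0 \<le> x * n" "x * n < n" using x n_pos by simp_all
  then have j: "real j \<le> x * n" "x * n < real j + 1" "j \<le> n"
    unfolding j_def by linarith+
  have "real j / n \<le> x" "x < (real j + 1) / n"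
    using j n_pos by (simp_all add: field_simps)
  then have dist: "\<bar>x - real j / n\<bar> \<le> 1 / n"
    by (simp add: abs_le_iff add_divide_distrib)
  have "\<bar>rand_f \<Lambda> a x - rand_f \<Lambda> a (real j / n)\<bar> \<le> (\<Sum>k\<in>\<Lambda>. \<bar>a k\<bar>) * (sqrt 2 * K * pi * \<bar>x - real j / n\<bar>)"
    by (rule rand_f_lipschitz[OF K(1)])
  also have "\<dots> \<le> (card \<Lambda> * nrm) * (sqrt 2 * K * pi * (1 / n))"
    using sum_abs_le_card_mult_sqrt_sum_squares[OF fin, of a] dist K(2) nrm
    by (intro mult_mono mult_left_mono) (auto simp: nrm_def)
  also have "\<dots> = nrm * ((card \<Lambda> * (sqrt 2 * K * pi)) / n)"
    by (simp add: field_simps)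
  also have "\<dots> \<le> nrm"
    using n n_pos nrm mult_left_mono[of "(card \<Lambda> * (sqrt 2 * K * pi)) / n" 1 nrm]
    by (simp add: divide_le_eq)
  finally show "\<bar>rand_f \<Lambda> a x\<bar> \<le> B + L2_norm01 (rand_f \<Lambda> a)"
    using grid j(3) L2_norm01_rand_f[OF fin \<open>0 \<notin> \<Lambda>\<close>] unfolding nrm_def by force
qed

lemma Linf_norm01_le_L2_norm01_if_grid_small:
  fixes K T :: real and n :: nat
  assumes fin: "finite \<Lambda>" and "0 \<notin> \<Lambda>" and K: "\<forall>k\<in>\<Lambda>. real k \<le> K" "0 \<le> K"
    and n: "1 \<le> n" "card \<Lambda> * (sqrt 2 * K * pi) \<le> n" and T: "1 \<le> T"
    and norm: "card \<Lambda> / 2 < (\<Sum>k\<in>\<Lambda>. (a k)\<^sup>2)"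
    and grid: "\<forall>j\<le>n. \<bar>rand_f \<Lambda> a (real j / n)\<bar> < (T - 1) * sqrt (card \<Lambda> / 2)"
  shows "Linf_norm01 (rand_f \<Lambda> a) \<le> T * L2_norm01 (rand_f \<Lambda> a)"
proof -
  have "sqrt (card \<Lambda> / 2) \<le> L2_norm01 (rand_f \<Lambda> a)"
    unfolding L2_norm01_rand_f[OF fin \<open>0 \<notin> \<Lambda>\<close>] using norm by simp
  then have "(T - 1) * sqrt (card \<Lambda> / 2) \<le> (T - 1) * L2_norm01 (rand_f \<Lambda> a)"
    using T by (intro mult_left_mono) auto
  then have "\<forall>j\<le>n. \<bar>rand_f \<Lambda> a (real j / n)\<bar> \<le> (T - 1) * L2_norm01 (rand_f \<Lambda> a)"
    using grid by (meson less_imp_le order_trans)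
  then have "Linf_norm01 (rand_f \<Lambda> a) \<le> (T - 1) * L2_norm01 (rand_f \<Lambda> a) + L2_norm01 (rand_f \<Lambda> a)"
    by (rule Linf_norm01_rand_f_le_grid[OF fin \<open>0 \<notin> \<Lambda>\<close> K n])
  then show ?thesis by (simp add: algebra_simps)
qed

definition Linf_le_L2_event :: "'a measure \<Rightarrow> (nat \<Rightarrow> 'a \<Rightarrow> real) \<Rightarrow> nat set \<Rightarrow> real \<Rightarrow> 'a set" where
  "Linf_le_L2_event M c \<Lambda> T = {\<omega> \<in> space M.
     Linf_norm01 (rand_f \<Lambda> (\<lambda>k. c k \<omega>)) \<le> T * L2_norm01 (rand_f \<Lambda> (\<lambda>k. c k \<omega>))}"

text \<open>Measurability holds because the supremum may be taken over the rationals.\<close>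

lemma sets_Linf_le_L2_event:
  assumes fin: "finite \<Lambda>" and "0 \<notin> \<Lambda>"
    and [measurable]: "\<And>k. k \<in> \<Lambda> \<Longrightarrow> c k \<in> borel_measurable M"
  shows "Linf_le_L2_event M c \<Lambda> T \<in> sets M"
proof -
  have "Linf_le_L2_event M c \<Lambda> T
     = {\<omega> \<in> space M. \<forall>r::rat. 0 < real_of_rat r \<longrightarrow> real_of_rat r < 1 \<longrightarrow>
          \<bar>\<Sum>k\<in>\<Lambda>. c k \<omega> * sqrt 2 * cos (real k * pi * real_of_rat r)\<bar> \<le> T * sqrt (\<Sum>k\<in>\<Lambda>. (c k \<omega>)\<^sup>2)}"
    unfolding Linf_le_L2_event_def L2_norm01_rand_f[OF assms(1,2)] Linf_norm01_rand_f_le_iff_Rats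
    by (auto simp: rand_f_def Rats_def)
  also have "\<dots> \<in> sets M"
    by measurable
  finally show ?thesis .
qed

context prob_space
begin

lemma prob_abs_rand_f_ge:
  assumes fin: "finite \<Lambda>" and "\<Lambda> \<noteq> {}" and ind: "indep_vars (\<lambda>_. borel) c \<Lambda>"
    and dist: "\<forall>k\<in>\<Lambda>. distributed M lborel (c k) std_normal_density" and t: "0 < t"
  shows "prob {\<omega>\<in>space M. t \<le> \<bar>rand_f \<Lambda> (\<lambda>k. c k \<omega>) x\<bar>} \<le> 2 * exp (- t\<^sup>2 / (4 * real (card \<Lambda>)))"
proof -
  define w where "w k = sqrt 2 * cos (real k * pi * x)" for k
  have "(\<Sum>k\<in>\<Lambda>. (w k)\<^sup>2) \<le> (\<Sum>k\<in>\<Lambda>. 2)"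
    by (intro sum_mono) (simp add: w_def power_mult_distrib cos_squared_eq)
  then have "prob {\<omega>\<in>space M. t \<le> \<bar>\<Sum>k\<in>\<Lambda>. w k * c k \<omega>\<bar>} \<le> 2 * exp (- t\<^sup>2 / (2 * (2 * real (card \<Lambda>))))"
    using fin \<open>\<Lambda> \<noteq> {}\<close> by (intro gaussian_sum_abs_tail[OF fin ind dist _ _ t]) (auto simp: card_gt_0_iff)
  then show ?thesis
    unfolding rand_f_def w_def by (simp add: ac_simps)
qed

lemma prob_ex_abs_rand_f_ge:
  assumes fin: "finite \<Lambda>" and "\<Lambda> \<noteq> {}" and ind: "indep_vars (\<lambda>_. borel) c \<Lambda>"
    and dist: "\<forall>k\<in>\<Lambda>. distributed M lborel (c k) std_normal_density" and t: "0 < t"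
    and X: "finite X"
  shows "prob {\<omega>\<in>space M. \<exists>x\<in>X. t \<le> \<bar>rand_f \<Lambda> (\<lambda>k. c k \<omega>) x\<bar>}
    \<le> 2 * real (card X) * exp (- t\<^sup>2 / (4 * real (card \<Lambda>)))"
proof -
  have [measurable]: "c k \<in> borel_measurable M" if "k \<in> \<Lambda>" for k
    using dist that distributed_measurable by fastforce
  define A where "A x = {\<omega>\<in>space M. t \<le> \<bar>rand_f \<Lambda> (\<lambda>k. c k \<omega>) x\<bar>}" for x
  have A_sets: "A x \<in> sets M" for x
    unfolding A_def rand_f_def by measurable
  have "prob {\<omega>\<in>space M. \<exists>x\<in>X. t \<le> \<bar>rand_f \<Lambda> (\<lambda>k. c k \<omega>) x\<bar>} = prob (\<Union>x\<in>X. A x)"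
    by (rule arg_cong[where f = prob]) (auto simp: A_def)
  also have "\<dots> \<le> (\<Sum>x\<in>X. prob (A x))"
    using X A_sets by (intro finite_measure_subadditive_finite) auto
  also have "\<dots> \<le> (\<Sum>x\<in>X. 2 * exp (- t\<^sup>2 / (4 * real (card \<Lambda>))))"
    unfolding A_def by (intro sum_mono prob_abs_rand_f_ge[OF fin \<open>\<Lambda> \<noteq> {}\<close> ind dist t])
  finally show ?thesis by simp
qed

lemma prob_Linf_le_L2_event:
  fixes K T :: real and n :: nat
  assumes fin: "finite \<Lambda>" and "0 \<notin> \<Lambda>" "\<Lambda> \<noteq> {}" and K: "\<forall>k\<in>\<Lambda>. real k \<le> K" "0 \<le> K"
    and n: "1 \<le> n" "card \<Lambda> * (sqrt 2 * K * pi) \<le> n" and T: "1 < T"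
    and ind: "indep_vars (\<lambda>_. borel) c \<Lambda>"
    and dist: "\<forall>k\<in>\<Lambda>. distributed M lborel (c k) std_normal_density"
  shows "1 - exp (- ((ln 3 - 1) / 2) * card \<Lambda>) - 2 * (real n + 1) * exp (- (T - 1)\<^sup>2 / 8)
    \<le> prob (Linf_le_L2_event M c \<Lambda> T)"
proof -
  define N where "N = real (card \<Lambda>)"
  have N: "0 < N" using fin \<open>\<Lambda> \<noteq> {}\<close> by (simp add: N_def card_gt_0_iff)
  define t where "t = (T - 1) * sqrt (N / 2)"
  have t: "0 < t" using T N by (simp add: t_def)
  define X where "X = (\<lambda>j. real j / n) ` {..n}"
  have "finite X" "card X \<le> n + 1"
    unfolding X_def using card_image_le[of "{..n}" "\<lambda>j. real j / n"] by auto
  have cm[measurable]: "c k \<in> borel_measurable M" if "k \<in> \<Lambda>" for k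
    using dist that distributed_measurable by fastforce
  define A0 where "A0 = {\<omega>\<in>space M. (\<Sum>k\<in>\<Lambda>. (c k \<omega>)\<^sup>2) \<le> N / 2}"
  define A where "A = {\<omega>\<in>space M. \<exists>x\<in>X. t \<le> \<bar>rand_f \<Lambda> (\<lambda>k. c k \<omega>) x\<bar>}"
  have good_sets: "Linf_le_L2_event M c \<Lambda> T \<in> sets M"
    by (rule sets_Linf_le_L2_event[OF fin \<open>0 \<notin> \<Lambda>\<close>]) (rule cm)
  have A0_sets: "A0 \<in> sets M" and A_sets: "A \<in> sets M"
    unfolding A0_def A_def rand_f_def using \<open>finite X\<close> by measurable
  have bad: "space M - Linf_le_L2_event M c \<Lambda> T \<subseteq> A0 \<union> A"
  proof
    fix \<omega> assume \<omega>: "\<omega> \<in> space M - Linf_le_L2_event M c \<Lambda> T"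
    show "\<omega> \<in> A0 \<union> A"
    proof (rule ccontr)
      assume "\<omega> \<notin> A0 \<union> A"
      then have "card \<Lambda> / 2 < (\<Sum>k\<in>\<Lambda>. (c k \<omega>)\<^sup>2)"
        and "\<forall>j\<le>n. \<bar>rand_f \<Lambda> (\<lambda>k. c k \<omega>) (real j / n)\<bar> < (T - 1) * sqrt (card \<Lambda> / 2)"
        using \<omega> by (simp_all add: A0_def A_def X_def N_def t_def not_le)
      then have "\<omega> \<in> Linf_le_L2_event M c \<Lambda> T"
        using Linf_norm01_le_L2_norm01_if_grid_small[OF fin \<open>0 \<notin> \<Lambda>\<close> K n] T \<omega>
        by (simp add: Linf_le_L2_event_def)
      then show False using \<omega> by simp
    qed
  qed
  have "prob (space M - Linf_le_L2_event M c \<Lambda> T) \<le> prob A0 + prob A"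
    by (intro order.trans[OF finite_measure_mono[OF bad]] measure_Un_le sets.Un A0_sets A_sets)
  also have "\<dots> \<le> exp (- ((ln 3 - 1) / 2) * N) + 2 * real (card X) * exp (- t\<^sup>2 / (4 * N))"
    unfolding A0_def A_def N_def
    using gaussian_sum_squares_lower_tail[OF fin ind dist]
      prob_ex_abs_rand_f_ge[OF fin \<open>\<Lambda> \<noteq> {}\<close> ind dist t \<open>finite X\<close>]
    by (intro add_mono) auto
  also have "2 * real (card X) * exp (- t\<^sup>2 / (4 * N)) \<le> 2 * (real n + 1) * exp (- (T - 1)\<^sup>2 / 8)"
  proof -
    have "exp (- t\<^sup>2 / (4 * N)) = exp (- (T - 1)\<^sup>2 / 8)"
      using N by (simp add: t_def power_mult_distrib)
    then show ?thesis
      using \<open>card X \<le> n + 1\<close> by (simp only:) (intro mult_right_mono; simp)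
  qed
  finally show ?thesis
    using prob_compl[OF good_sets] unfolding N_def by linarith
qed

end

lemma alpha_minus_pos: "0 < \<gamma> \<Longrightarrow> \<gamma> < 1 \<Longrightarrow> 0 < alpha_minus \<gamma>"
  unfolding alpha_minus_def by simp

lemma alpha_minus_less_alpha_plus: "\<gamma> < 1 \<Longrightarrow> alpha_minus \<gamma> < alpha_plus \<gamma>"
  unfolding alpha_minus_def alpha_plus_def by (simp add: divide_strict_right_mono)

lemma Lambda_bounds:
  assumes a: "0 < alpha_minus \<gamma>" "alpha_minus \<gamma> < alpha_plus \<gamma>" and e: "0 < \<epsilon>"
  shows "finite (Lambda \<gamma> \<epsilon>)" "0 \<notin> Lambda \<gamma> \<epsilon>"
    "\<forall>k\<in>Lambda \<gamma> \<epsilon>. real k \<le> alpha_plus \<gamma> / \<epsilon>"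
    "(alpha_plus \<gamma> - alpha_minus \<gamma>) / \<epsilon> - 1 \<le> card (Lambda \<gamma> \<epsilon>)"
    "card (Lambda \<gamma> \<epsilon>) \<le> alpha_plus \<gamma> / \<epsilon>"
proof -
  define a b where "a = alpha_minus \<gamma>" and "b = alpha_plus \<gamma>"
  define l u where "l = nat \<lceil>a / \<epsilon>\<rceil>" and "u = nat \<lfloor>b / \<epsilon>\<rfloor>"
  have "0 < a / \<epsilon>" "a / \<epsilon> < b / \<epsilon>"
    using a e by (simp_all add: a_def b_def divide_strict_right_mono)
  then have cl: "1 \<le> \<lceil>a / \<epsilon>\<rceil>" and fl: "0 \<le> \<lfloor>b / \<epsilon>\<rfloor>" by linarith+
  have eq: "Lambda \<gamma> \<epsilon> = {l..u}"
    unfolding Lambda_def l_def u_def a_def[symmetric] b_def[symmetric] using cl fl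
    by (auto simp: le_nat_iff nat_le_iff)
  have l: "1 \<le> l" "real l \<le> a / \<epsilon> + 1" unfolding l_def using cl by linarith+
  have u: "b / \<epsilon> - 1 \<le> real u" "real u \<le> b / \<epsilon>" unfolding u_def using fl by linarith+
  show "finite (Lambda \<gamma> \<epsilon>)" "0 \<notin> Lambda \<gamma> \<epsilon>" "\<forall>k\<in>Lambda \<gamma> \<epsilon>. real k \<le> alpha_plus \<gamma> / \<epsilon>"
    unfolding eq b_def[symmetric] using l u by auto
  have "card (Lambda \<gamma> \<epsilon>) = u + 1 - l" unfolding eq by simp
  then show "(alpha_plus \<gamma> - alpha_minus \<gamma>) / \<epsilon> - 1 \<le> card (Lambda \<gamma> \<epsilon>)"
    "card (Lambda \<gamma> \<epsilon>) \<le> alpha_plus \<gamma> / \<epsilon>"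
    unfolding a_def[symmetric] b_def[symmetric] using l u by (simp_all add: diff_divide_distrib)
qed

lemma (in prob_space) prob_Linf_le_L2_event_Lambda:
  fixes \<gamma> \<delta> \<epsilon> :: real
  defines "a \<equiv> alpha_minus \<gamma>" and "b \<equiv> alpha_plus \<gamma>"
  assumes ab: "0 < a" "a < b" and e: "0 < \<epsilon>" "\<epsilon> \<le> 1" "2 * \<epsilon> \<le> b - a" "1 < \<epsilon> powr (-\<delta>)"
    and ind: "indep_vars (\<lambda>_. borel) c (Lambda \<gamma> \<epsilon>)"
    and dist: "\<forall>k\<in>Lambda \<gamma> \<epsilon>. distributed M lborel (c k) std_normal_density"
  shows "1 - (exp (- ((ln 3 - 1) / 2) * ((b - a) / \<epsilon> - 1))
            + 2 * (sqrt 2 * pi * b\<^sup>2 + 2) * (\<epsilon> powr (-2) * exp (- (\<epsilon> powr (-\<delta>) - 1)\<^sup>2 / 8)))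
    \<le> prob (Linf_le_L2_event M c (Lambda \<gamma> \<epsilon>) (\<epsilon> powr (-\<delta>)))"
proof -
  define \<Lambda> where "\<Lambda> = Lambda \<gamma> \<epsilon>"
  define n where "n = nat \<lceil>sqrt 2 * pi * (b / \<epsilon>)\<^sup>2\<rceil>"
  define E where "E = exp (- (\<epsilon> powr (-\<delta>) - 1)\<^sup>2 / 8)"
  note \<Lambda> = Lambda_bounds[OF ab[unfolded a_def b_def] e(1), folded \<Lambda>_def a_def b_def]
  have "2 \<le> (b - a) / \<epsilon>" using e by (simp add: pos_le_divide_eq mult.commute)
  then have "\<Lambda> \<noteq> {}" using \<Lambda>(4) by auto
  have "0 < sqrt 2 * pi * (b / \<epsilon>)\<^sup>2" using ab e by simp
  then have n: "1 \<le> n" "sqrt 2 * pi * (b / \<epsilon>)\<^sup>2 \<le> n" "real n \<le> sqrt 2 * pi * b\<^sup>2 / \<epsilon>\<^sup>2 + 1"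
    unfolding n_def by (linarith, linarith, simp add: power_divide)
  have "card \<Lambda> * (sqrt 2 * (b / \<epsilon>) * pi) \<le> (b / \<epsilon>) * (sqrt 2 * (b / \<epsilon>) * pi)"
    using \<Lambda>(5) ab e by (intro mult_right_mono) auto
  then have grid: "card \<Lambda> * (sqrt 2 * (b / \<epsilon>) * pi) \<le> n"
    using n(2) by (simp add: power2_eq_square ac_simps)
  have "1 < ln (3::real)" using ln_less_cancel_iff[of "exp 1" 3] e_less_272 by simp
  then have E1: "exp (- ((ln 3 - 1) / 2) * card \<Lambda>) \<le> exp (- ((ln 3 - 1) / 2) * ((b - a) / \<epsilon> - 1))"
    using \<Lambda>(4) by (simp add: mult_left_mono)
  have "\<epsilon>\<^sup>2 \<le> 1" using e by (simp add: power_le_one)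
  then have "2 \<le> 2 / \<epsilon>\<^sup>2" using e by (simp add: field_simps)
  then have "real n + 1 \<le> (sqrt 2 * pi * b\<^sup>2 + 2) * \<epsilon> powr (-2)"
    using n(3) e by (simp add: powr_minus_divide powr_realpow add_divide_distrib)
  then have "2 * (real n + 1) \<le> 2 * (sqrt 2 * pi * b\<^sup>2 + 2) * \<epsilon> powr (-2)"
    using mult_left_mono[of _ _ 2] by (simp only: mult.assoc) simp
  then have E2: "2 * (real n + 1) * E \<le> 2 * (sqrt 2 * pi * b\<^sup>2 + 2) * (\<epsilon> powr (-2) * E)"
    unfolding mult.assoc[symmetric] by (rule mult_right_mono) (simp add: E_def)
  have "0 \<le> b / \<epsilon>" using ab e by simp
  show ?thesis
    using prob_Linf_le_L2_event[OF \<Lambda>(1,2) \<open>\<Lambda> \<noteq> {}\<close> \<Lambda>(3) \<open>0 \<le> b / \<epsilon>\<close> n(1) grid e(4)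
        ind[folded \<Lambda>_def] dist[folded \<Lambda>_def]] ab e E1 E2
    unfolding \<Lambda>_def E_def by linarith
qed

section \<open>Asymptotics as \<open>\<epsilon> \<rightarrow> 0\<close>\<close>

lemma exp_neg_inverse_plus_gaussian_bigo_powr:
  fixes r d s \<delta> q :: real
  assumes "0 < r" "0 < d" "s \<noteq> 0" "0 < \<delta>"
  shows "(\<lambda>\<epsilon>. exp (- r * (d / \<epsilon> - 1)) + s * (\<epsilon> powr (-2) * exp (- (\<epsilon> powr (-\<delta>) - 1)\<^sup>2 / 8)))
    \<in> O[at_right 0](\<lambda>\<epsilon>. \<epsilon> powr q)"
proof (intro sum_in_bigo(1))
  show "(\<lambda>\<epsilon>. exp (- r * (d / \<epsilon> - 1))) \<in> O[at_right 0](\<lambda>\<epsilon>. \<epsilon> powr q)"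
    using assms by real_asymp
  have "(\<lambda>\<epsilon>. \<epsilon> powr (-2) * exp (- (\<epsilon> powr (-\<delta>) - 1)\<^sup>2 / 8)) \<in> O[at_right 0](\<lambda>\<epsilon>. \<epsilon> powr q)"
    using assms by real_asymp
  then show "(\<lambda>\<epsilon>. s * (\<epsilon> powr (-2) * exp (- (\<epsilon> powr (-\<delta>) - 1)\<^sup>2 / 8))) \<in> O[at_right 0](\<lambda>\<epsilon>. \<epsilon> powr q)"
    using \<open>s \<noteq> 0\<close> by simp
qed

text \<open>Read \<open>P \<epsilon> a\<close> as ``the claim holds at \<open>\<epsilon>\<close> with failure probability \<open>a\<close>''; it holds
  trivially once \<open>a \<ge> 1\<close>, which takes care of all \<open>\<epsilon>\<close> bounded away from \<open>0\<close>.\<close>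

lemma uniform_powr_bound_if_eventually:
  fixes P :: "real \<Rightarrow> real \<Rightarrow> bool" and q :: real
  assumes q: "0 < q" and ev: "\<forall>\<^sub>F \<epsilon> in at_right 0. P \<epsilon> (C * \<epsilon> powr q)"
    and mono: "\<And>\<epsilon> a b. a \<le> b \<Longrightarrow> P \<epsilon> a \<Longrightarrow> P \<epsilon> b" and trivial: "\<And>\<epsilon> a. 1 \<le> a \<Longrightarrow> P \<epsilon> a"
  shows "\<exists>C'>0. \<forall>\<epsilon>>0. P \<epsilon> (C' * \<epsilon> powr q)"
proof -
  obtain e0 where "0 < e0" and small: "\<And>\<epsilon>. 0 < \<epsilon> \<Longrightarrow> \<epsilon> < e0 \<Longrightarrow> P \<epsilon> (C * \<epsilon> powr q)"
    using ev unfolding eventually_at_right_field by blast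
  define C' where "C' = max C (e0 powr (-q))"
  have "P \<epsilon> (C' * \<epsilon> powr q)" if "0 < \<epsilon>" for \<epsilon>
  proof (cases "\<epsilon> < e0")
    case True
    have "C * \<epsilon> powr q \<le> C' * \<epsilon> powr q"
      unfolding C'_def by (intro mult_right_mono) auto
    then show ?thesis using mono small[OF that True] by blast
  next
    case False
    have "1 = e0 powr (-q) * e0 powr q" using \<open>0 < e0\<close> by (simp add: powr_minus)
    also have "\<dots> \<le> C' * \<epsilon> powr q"
      using False \<open>0 < e0\<close> q unfolding C'_def by (intro mult_mono powr_mono2) (auto simp: le_max_iff_disj)
    finally show ?thesis by (rule trivial)
  qed
  moreover have "0 < C'" using \<open>0 < e0\<close> by (simp add: C'_def less_max_iff_disj)
  ultimately show ?thesis by blast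
qed

lemma eventually_prob_Linf_le_L2_event:
  fixes \<gamma> \<delta> q :: real
  assumes \<gamma>: "0 < \<gamma>" "\<gamma> < 1" and \<delta>: "0 < \<delta>"
  shows "\<exists>C. \<forall>\<^sub>F \<epsilon> in at_right 0. \<forall>(M::'a measure) (c::nat \<Rightarrow> 'a \<Rightarrow> real).
           prob_space M \<longrightarrow> prob_space.indep_vars M (\<lambda>_. borel) c (Lambda \<gamma> \<epsilon>) \<longrightarrow>
           (\<forall>k\<in>Lambda \<gamma> \<epsilon>. distributed M lborel (c k) std_normal_density) \<longrightarrow>
           1 - C * \<epsilon> powr q \<le> measure M (Linf_le_L2_event M c (Lambda \<gamma> \<epsilon>) (\<epsilon> powr (-\<delta>)))"
proof -
  define a b where "a = alpha_minus \<gamma>" and "b = alpha_plus \<gamma>"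
  have ab: "0 < a" "a < b"
    using alpha_minus_pos[OF \<gamma>] alpha_minus_less_alpha_plus[OF \<gamma>(2)] by (simp_all add: a_def b_def)
  define d where "d = b - a"
  define r :: real where "r = (ln 3 - 1) / 2"
  define s where "s = 2 * (sqrt 2 * pi * b\<^sup>2 + 2)"
  define fail where "fail \<epsilon> = exp (- r * (d / \<epsilon> - 1))
    + s * (\<epsilon> powr (-2) * exp (- (\<epsilon> powr (-\<delta>) - 1)\<^sup>2 / 8))" for \<epsilon>
  have "0 < r" using ln_less_cancel_iff[of "exp 1" 3] e_less_272 by (simp add: r_def)
  moreover have "0 < d" using ab by (simp add: d_def)
  moreover have "s \<noteq> 0" unfolding s_def by (simp add: add_nonneg_eq_0_iff)
  ultimately have "fail \<in> O[at_right 0](\<lambda>\<epsilon>. \<epsilon> powr q)"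
    unfolding fail_def using \<delta> by (rule exp_neg_inverse_plus_gaussian_bigo_powr)
  then obtain C where "\<forall>\<^sub>F \<epsilon> in at_right 0. norm (fail \<epsilon>) \<le> C * norm (\<epsilon> powr q)"
    by (elim landau_o.bigE)
  moreover have "\<forall>\<^sub>F \<epsilon> in at_right 0. 0 < (\<epsilon>::real)"
    by (rule eventually_at_right_less)
  moreover have "\<forall>\<^sub>F \<epsilon> in at_right 0. \<epsilon> \<le> (1::real)"
    by real_asymp
  moreover have "\<forall>\<^sub>F \<epsilon> in at_right 0. 2 * \<epsilon> \<le> d"
    using \<open>0 < d\<close> by real_asymp
  moreover have "\<forall>\<^sub>F \<epsilon> in at_right 0. 1 < \<epsilon> powr (-\<delta>)"
    using \<delta> by real_asymp
  ultimately have "\<forall>\<^sub>F \<epsilon> in at_right 0. \<forall>(M::'a measure) c.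
           prob_space M \<longrightarrow> prob_space.indep_vars M (\<lambda>_. borel) c (Lambda \<gamma> \<epsilon>) \<longrightarrow>
           (\<forall>k\<in>Lambda \<gamma> \<epsilon>. distributed M lborel (c k) std_normal_density) \<longrightarrow>
           1 - C * \<epsilon> powr q \<le> measure M (Linf_le_L2_event M c (Lambda \<gamma> \<epsilon>) (\<epsilon> powr (-\<delta>)))"
  proof eventually_elim
    case (elim \<epsilon>)
    have "1 - fail \<epsilon> \<le> measure M (Linf_le_L2_event M c (Lambda \<gamma> \<epsilon>) (\<epsilon> powr (-\<delta>)))"
      if "prob_space M" "prob_space.indep_vars M (\<lambda>_. borel) c (Lambda \<gamma> \<epsilon>)"
        "\<forall>k\<in>Lambda \<gamma> \<epsilon>. distributed M lborel (c k) std_normal_density" for M :: "'a measure" and c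
      using prob_space.prob_Linf_le_L2_event_Lambda[OF that(1) _ _ _ _ _ _ that(2,3)] ab elim
      unfolding fail_def r_def s_def d_def a_def b_def by simp
    moreover have "fail \<epsilon> \<le> C * \<epsilon> powr q" using elim by simp
    ultimately show ?case by (blast intro: order_trans diff_left_mono)
  qed
  then show ?thesis by blast
qed

theorem theorem2p6:
  fixes \<gamma> \<delta> q :: real
  assumes "0 < \<gamma>" "\<gamma> < 1" "0 < \<delta>" "1 < q"
  shows "\<exists>C>0. \<forall>(\<epsilon>::real) (M::'a measure) (c::nat \<Rightarrow> 'a \<Rightarrow> real).
           0 < \<epsilon> \<longrightarrow> prob_space M \<longrightarrow>
           prob_space.indep_vars M (\<lambda>_. borel) c (Lambda \<gamma> \<epsilon>) \<longrightarrow>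
           (\<forall>k\<in>Lambda \<gamma> \<epsilon>. distributed M lborel (c k) std_normal_density) \<longrightarrow>
           measure M {\<omega> \<in> space M.
               Linf_norm01 (rand_f (Lambda \<gamma> \<epsilon>) (\<lambda>k. c k \<omega>))
                 \<le> \<epsilon> powr (-\<delta>) * L2_norm01 (rand_f (Lambda \<gamma> \<epsilon>) (\<lambda>k. c k \<omega>))}
             \<ge> 1 - C * \<epsilon> powr q"
proof -
  define P where "P \<epsilon> a \<longleftrightarrow> (\<forall>(M::'a measure) c.
           prob_space M \<longrightarrow> prob_space.indep_vars M (\<lambda>_. borel) c (Lambda \<gamma> \<epsilon>) \<longrightarrow>
           (\<forall>k\<in>Lambda \<gamma> \<epsilon>. distributed M lborel (c k) std_normal_density) \<longrightarrow>
           1 - a \<le> measure M (Linf_le_L2_event M c (Lambda \<gamma> \<epsilon>) (\<epsilon> powr (-\<delta>))))" for \<epsilon> a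
  obtain C where "\<forall>\<^sub>F \<epsilon> in at_right 0. P \<epsilon> (C * \<epsilon> powr q)"
    unfolding P_def using eventually_prob_Linf_le_L2_event[OF assms(1-3)] by blast
  then have "\<exists>C'>0. \<forall>\<epsilon>>0. P \<epsilon> (C' * \<epsilon> powr q)"
  proof (rule uniform_powr_bound_if_eventually[rotated])
    show "0 < q" using assms(4) by simp
    show "P \<epsilon> b" if "a \<le> b" "P \<epsilon> a" for \<epsilon> a b
      using that unfolding P_def by (meson diff_left_mono order_trans)
    show "P \<epsilon> a" if "1 \<le> a" for \<epsilon> a
      using that measure_nonneg unfolding P_def by (meson diff_le_0_iff_le order_trans)
  qed
  then show ?thesis
    unfolding P_def Linf_le_L2_event_def by blast
qed

end
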